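(* Let $X_n(\underline{d})=X_n(d_1,\dots,d_r)\subset\mathbb{C}P^{n+r}$ be a complete intersection with $d_1,\dots,d_r>1$ and set $c_1=n+r+1-\sum_{i=1}^rd_i$. Then: (1) ${\rm Td}(X_n(\underline{d}))=1$ if $c_1>0$, and ${\rm Td}(X_n(\underline{d}))=1+(-1)^n$ if $c_1=0$. (2) If $c_1<0$, then $(-1)^n{\rm Td}(X_n(\underline{d}))\geqslant\binom{n+1-c_1}{n+1}+(-1)^n$.
   Context: A complete intersection $X_n(d_1,\dots,d_r)\subset\mathbb{C}P^{n+r}$ is a compact complex $n$-dimensional manifold given as the transversal intersection of $r$ nonsingular hypersurfaces of degrees $d_1,\dots,d_r$; its first Chern class is $c_1x$ with $x$ the pullback of the hyperplane class. The Todd genus is ${\rm Td}(M)=\big(\prod_i\frac{x_i}{1-e^{-x_i}}\big)[M]$ for formal Chern roots $x_i$. Generalized binomial coefficients: $\binom{a}{m}=\frac{a(a-1)\cdots(a-m+1)}{m!}$. *)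

theory Defs
  imports "HOL-Computational_Algebra.Formal_Power_Series"
begin

definition one_minus_exp_over_x :: "real \<Rightarrow> real fps" where
  "one_minus_exp_over_x a = fps_shift 1 (1 - fps_exp (- a))"

definition todd_series :: "real fps" where
  "todd_series = inverse (one_minus_exp_over_x 1)"

text \<open>Its tangent bundle satisfies TX + (O(d_1) + ... + O(d_r)) = (n+r+1) O(1) (stably,
  restricted to X), so Td(TX) = (x/(1-e^{-x}))^{n+r+1} * prod_i (1-e^{-d_i x})/(d_i x),
  and evaluation on the fundamental class is (d_1 ... d_r) times the coefficient of x^n.\<close>
definition todd_genus_ci :: "nat \<Rightarrow> nat list \<Rightarrow> real" where
  "todd_genus_ci n ds =
     (\<Prod>d\<leftarrow>ds. real d) *
     fps_nth (todd_series ^ (n + length ds + 1) *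
      (\<Prod>d\<leftarrow>ds. fps_const (1 / real d) * one_minus_exp_over_x (real d))) n"

definition c1_ci :: "nat \<Rightarrow> nat list \<Rightarrow> int" where
  "c1_ci n ds = int n + int (length ds) + 1 - int (sum_list ds)"

end

theory Submission
  imports Defs
begin

(* With T(x) = x/(1 - e^(-x)) and (1 - e^(-dx))/(dx) = (1/d) T(x)^(-1) (1 + e^(-x) + ... + e^(-(d-1)x)),
   the Todd genus becomes Td = [x^n] T^(n+1) prod_i (sum_{j<d_i} e^(-jx)), i.e. the sum over the box
   0 <= j_i < d_i of a(k) = [x^n] T^(n+1) e^(-kx) at k = j_1 + ... + j_r. The ODE x T' = T - T^2 + x T
   gives a(0) = 1, and e^(-x) = 1 - x/T gives a(k) = (-1)^n binom(k-1, n) for k > 0.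
   These terms vanish for k <= n, and the largest k is s = sum_i (d_i - 1) = n + 1 - c_1, which yields
   part (1). For part (2), all terms (-1)^n a(k) with k > 0 are nonnegative, and those along a monotone
   path from the corner 0 to the opposite corner already sum to binom(s, n+1) (hockey stick). *)

unbundle fps_syntax

lemma fps_X_mult_one_minus_exp_over_x:
  "fps_X * one_minus_exp_over_x a = 1 - fps_exp (- a)"
proof (rule fps_ext)
  fix n show "(fps_X * one_minus_exp_over_x a) $ n = (1 - fps_exp (- a)) $ n"
    by (cases n) (simp_all add: one_minus_exp_over_x_def)
qed

lemma one_minus_exp_over_x_nth_0 [simp]: "one_minus_exp_over_x a $ 0 = a"
  by (simp add: one_minus_exp_over_x_def)

lemma one_minus_exp_over_x_mult_todd_series: "one_minus_exp_over_x 1 * todd_series = 1"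
  unfolding todd_series_def by (rule inverse_mult_eq_1') simp

lemma todd_series_nth_0 [simp]: "todd_series $ 0 = 1"
  using arg_cong[OF one_minus_exp_over_x_mult_todd_series, of "\<lambda>f. f $ 0"] by simp

lemma todd_series_ode:
  "fps_X * fps_deriv todd_series = todd_series - todd_series ^ 2 + fps_X * todd_series"
proof -
  let ?E = "one_minus_exp_over_x 1" and ?T = todd_series
  have "?E + fps_X * fps_deriv ?E = fps_exp (-1)"
    using arg_cong[OF fps_X_mult_one_minus_exp_over_x[of 1], of fps_deriv]
    by (simp add: add.commute fps_const_neg[symmetric] del: fps_const_neg)
  also have "fps_exp (-1) = 1 - fps_X * ?E"
    using fps_X_mult_one_minus_exp_over_x[of 1] by simp
  finally have E': "fps_X * fps_deriv ?E = 1 - ?E - fps_X * ?E"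
    by (simp add: algebra_simps)
  have "fps_X * fps_deriv ?T = - (fps_X * fps_deriv ?E) * ?T ^ 2"
    unfolding todd_series_def by (simp add: fps_inverse_deriv)
  also have "\<dots> = - (?T ^ 2) + (?E * ?T) * ?T + fps_X * ((?E * ?T) * ?T)"
    unfolding E' by (simp add: algebra_simps power2_eq_square)
  finally show ?thesis
    by (simp add: one_minus_exp_over_x_mult_todd_series)
qed

lemma todd_series_power_nth_Suc:
  "(todd_series ^ Suc (Suc m)) $ Suc m = (todd_series ^ Suc m) $ m"
proof -
  let ?T = todd_series
  define P Q where "P = ?T ^ Suc m" and "Q = ?T ^ Suc (Suc m)"
  have "fps_X * fps_deriv P = fps_const (of_nat (Suc m)) * ?T ^ m * (fps_X * fps_deriv ?T)"
    unfolding P_def by (simp only: fps_deriv_power diff_Suc_1 mult_ac)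
  also have "\<dots> = fps_const (of_nat (Suc m)) * (P - Q + fps_X * P)"
    unfolding todd_series_ode P_def Q_def by (simp add: algebra_simps power2_eq_square)
  finally have "(fps_X * fps_deriv P) $ Suc m = (fps_const (of_nat (Suc m)) * (P - Q + fps_X * P)) $ Suc m"
    by simp
  then have "of_nat (Suc m) * P $ Suc m = of_nat (Suc m) * (P $ Suc m - Q $ Suc m + P $ m)"
    by (simp del: of_nat_Suc)
  then show ?thesis
    by (simp add: P_def Q_def algebra_simps del: of_nat_Suc)
qed

lemma todd_series_power_nth_diag: "(todd_series ^ Suc n) $ n = 1"
  by (induction n) (simp_all add: todd_series_power_nth_Suc del: power_Suc)

definition exp_geometric_sum :: "nat \<Rightarrow> real fps" where
  "exp_geometric_sum d = (\<Sum>j<d. fps_exp (- real j))"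

lemma fps_exp_neg_of_nat_add: "fps_exp (- real (k + j)) = fps_exp (- real k) * fps_exp (- real j)"
  by (simp add: fps_exp_add_mult[symmetric])

lemma one_minus_exp_over_x_of_nat:
  "one_minus_exp_over_x (real d) = one_minus_exp_over_x 1 * exp_geometric_sum d"
proof -
  have "fps_X * one_minus_exp_over_x 1 * exp_geometric_sum d
        = (\<Sum>j<d. fps_exp (- real j) - fps_exp (- real (Suc j)))"
    by (simp add: fps_X_mult_one_minus_exp_over_x exp_geometric_sum_def sum_distrib_left
          algebra_simps fps_exp_neg_of_nat_add[of 1, simplified])
  also have "\<dots> = fps_X * one_minus_exp_over_x (real d)"
    by (subst sum_lessThan_telescope') (simp add: fps_X_mult_one_minus_exp_over_x)
  finally show ?thesis
    by (simp add: mult.assoc)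
qed

lemma todd_series_power_mult_prod:
  assumes "\<forall>d\<in>set ds. d > 0"
  shows "fps_const (\<Prod>d\<leftarrow>ds. real d) * todd_series ^ (m + length ds)
           * (\<Prod>d\<leftarrow>ds. fps_const (1 / real d) * one_minus_exp_over_x (real d))
         = todd_series ^ m * (\<Prod>d\<leftarrow>ds. exp_geometric_sum d)"
  using assms
proof (induction ds)
  case (Cons d ds)
  let ?E = "one_minus_exp_over_x 1" and ?T = todd_series
  have inv: "fps_const (real d) * fps_const (1 / real d) = 1"
    unfolding fps_const_mult[symmetric] using Cons.prems by simp
  have "fps_const (real d) * ?T * (fps_const (1 / real d) * one_minus_exp_over_x (real d))
        = (fps_const (real d) * fps_const (1 / real d)) * (?E * ?T) * exp_geometric_sum d"
    by (simp only: one_minus_exp_over_x_of_nat mult_ac)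
  also have "\<dots> = exp_geometric_sum d"
    by (simp only: inv one_minus_exp_over_x_mult_todd_series mult_1_left)
  finally have step: "fps_const (real d) * ?T * (fps_const (1 / real d) * one_minus_exp_over_x (real d))
                      = exp_geometric_sum d" .
  have "fps_const (\<Prod>d\<leftarrow>d # ds. real d) * ?T ^ (m + length (d # ds))
          * (\<Prod>d\<leftarrow>d # ds. fps_const (1 / real d) * one_minus_exp_over_x (real d))
        = (fps_const (real d) * ?T * (fps_const (1 / real d) * one_minus_exp_over_x (real d)))
          * (fps_const (\<Prod>d\<leftarrow>ds. real d) * ?T ^ (m + length ds)
             * (\<Prod>d\<leftarrow>ds. fps_const (1 / real d) * one_minus_exp_over_x (real d)))"
    by (simp add: mult_ac)
  then show ?case
    using Cons step by simp
qed simp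

definition pred_choose :: "nat \<Rightarrow> nat \<Rightarrow> real" where
  "pred_choose n k = (if k = 0 then 0 else real ((k - 1) choose n))"

definition todd_exp_coeff :: "nat \<Rightarrow> nat \<Rightarrow> real" where
  "todd_exp_coeff n k = of_bool (k = 0) + (-1) ^ n * pred_choose n k"

lemma todd_exp_coeff_Suc:
  "todd_exp_coeff n (Suc k) = todd_exp_coeff n k - (if n = 0 then 0 else todd_exp_coeff (n - 1) k)"
  by (cases n; cases k) (simp_all add: todd_exp_coeff_def pred_choose_def algebra_simps)

lemma todd_series_power_exp_nth:
  "(todd_series ^ Suc n * fps_exp (- real k)) $ n = todd_exp_coeff n k"
proof (induction k arbitrary: n)
  case 0
  then show ?case
    by (simp add: todd_series_power_nth_diag todd_exp_coeff_def pred_choose_def del: power_Suc)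
next
  case (Suc k)
  let ?E = "one_minus_exp_over_x 1" and ?T = todd_series
  have exp_Suc: "fps_exp (- real (Suc k)) = fps_exp (- real k) * (1 - fps_X * ?E)"
    using fps_exp_neg_of_nat_add[of k 1] by (simp add: fps_X_mult_one_minus_exp_over_x)
  have "?T ^ Suc n * fps_exp (- real (Suc k))
             = ?T ^ Suc n * fps_exp (- real k) - fps_X * ((?E * ?T) * (?T ^ n * fps_exp (- real k)))"
    unfolding exp_Suc by (simp add: algebra_simps)
  then have "(?T ^ Suc n * fps_exp (- real (Suc k))) $ n
             = todd_exp_coeff n k - (if n = 0 then 0 else (?T ^ n * fps_exp (- real k)) $ (n - 1))"
    by (simp add: Suc.IH one_minus_exp_over_x_mult_todd_series del: power_Suc)
  also have "\<dots> = todd_exp_coeff n (Suc k)"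
    using Suc.IH[of "n - 1"] by (cases n) (simp_all add: todd_exp_coeff_Suc)
  finally show ?case .
qed

fun box_sum :: "(nat \<Rightarrow> 'a::comm_monoid_add) \<Rightarrow> nat list \<Rightarrow> nat \<Rightarrow> 'a" where
  "box_sum g [] k = g k"
| "box_sum g (d # ds) k = (\<Sum>j<d. box_sum g ds (k + j))"

lemma box_sum_add: "box_sum (\<lambda>m. f m + g m) ds k = box_sum f ds k + box_sum g ds k"
  by (induction ds arbitrary: k) (simp_all add: sum.distrib)

lemma box_sum_mult: "box_sum (\<lambda>m. c * g m) ds k = (c :: 'a::semiring_0) * box_sum g ds k"
  by (induction ds arbitrary: k) (simp_all add: sum_distrib_left)

lemma box_sum_indicator_0:
  assumes "\<forall>d\<in>set ds. d > 0"
  shows "box_sum (\<lambda>m. of_bool (m = 0)) ds k = (of_bool (k = 0) :: 'a::{comm_monoid_add,zero_neq_one})"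
  using assms
proof (induction ds arbitrary: k)
  case (Cons d ds)
  then have "box_sum (\<lambda>m. of_bool (m = 0)) (d # ds) k = (\<Sum>j<d. of_bool (k + j = 0) :: 'a)"
    by simp
  also have "\<dots> = of_bool (k = 0)"
    using Cons.prems by (cases d) (simp_all add: sum.lessThan_Suc_shift del: sum.lessThan_Suc)
  finally show ?case .
qed simp

lemma box_sum_eq_top:
  assumes "\<forall>d\<in>set ds. d > 0" and "\<forall>m < k + (\<Sum>d\<leftarrow>ds. d - 1). g m = 0"
  shows "box_sum g ds k = g (k + (\<Sum>d\<leftarrow>ds. d - 1))"
  using assms
proof (induction ds arbitrary: k)
  case (Cons d ds)
  let ?s = "\<Sum>d\<leftarrow>ds. d - 1"
  from Cons.prems obtain d' where d: "d = Suc d'" by (cases d) auto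
  have IH: "box_sum g ds (k + j) = g (k + j + ?s)" if "j \<le> d'" for j
    using Cons that d by simp
  have "box_sum g (d # ds) k = (\<Sum>j<d'. g (k + j + ?s)) + g (k + d' + ?s)"
    by (simp add: d IH)
  also have "(\<Sum>j<d'. g (k + j + ?s)) = 0"
    using Cons.prems(2) d by simp
  finally show ?case
    using d by (simp add: add.assoc)
qed simp

(* The left-hand side keeps one box point for each total k + i, along a monotone lattice path. *)
lemma box_sum_ge_diagonal_sum:
  fixes g :: "nat \<Rightarrow> 'a::ordered_comm_monoid_add"
  assumes "\<forall>d\<in>set ds. d > 0" and "\<And>m. g m \<ge> 0"
  shows "(\<Sum>i\<le>(\<Sum>d\<leftarrow>ds. d - 1). g (k + i)) \<le> box_sum g ds k"
  using assms(1)
proof (induction ds arbitrary: k)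
  case (Cons d ds)
  let ?s = "\<Sum>d\<leftarrow>ds. d - 1"
  from Cons.prems obtain d' where d: "d = Suc d'" by (cases d) auto
  have IH: "(\<Sum>i\<le>?s. g (k + i)) \<le> box_sum g ds k" for k
    using Cons by simp
  have g_le: "g k \<le> box_sum g ds k" for k
    using IH[of k] sum_mono2[of "{..?s}" "{0}" "\<lambda>i. g (k + i)"] assms(2) by simp
  have split: "(\<Sum>i\<le>d' + s. g (k + i)) = (\<Sum>i<d'. g (k + i)) + (\<Sum>i\<le>s. g (k + d' + i))" for s
    by (induction s) (simp_all add: add.assoc flip: lessThan_Suc_atMost)
  have "(\<Sum>i\<le>d' + ?s. g (k + i)) = (\<Sum>i<d'. g (k + i)) + (\<Sum>i\<le>?s. g (k + d' + i))"
    by (rule split)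
  also have "\<dots> \<le> (\<Sum>j<d'. box_sum g ds (k + j)) + box_sum g ds (k + d')"
    by (intro add_mono sum_mono g_le IH)
  also have "\<dots> = box_sum g (d # ds) k"
    by (simp add: d)
  finally show ?case
    by (simp add: d)
qed simp

lemma todd_series_power_exp_prod_nth:
  "(todd_series ^ Suc n * fps_exp (- real k) * (\<Prod>d\<leftarrow>ds. exp_geometric_sum d)) $ n
   = box_sum (todd_exp_coeff n) ds k"
proof (induction ds arbitrary: k)
  case Nil
  then show ?case by (simp add: todd_series_power_exp_nth del: power_Suc)
next
  case (Cons d ds)
  let ?F = "\<lambda>k. todd_series ^ Suc n * fps_exp (- real k) * (\<Prod>d\<leftarrow>ds. exp_geometric_sum d)"
  have "todd_series ^ Suc n * fps_exp (- real k) * (\<Prod>d\<leftarrow>d # ds. exp_geometric_sum d)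
        = (\<Sum>j<d. ?F (k + j))"
    unfolding fps_exp_neg_of_nat_add
    by (simp add: exp_geometric_sum_def sum_distrib_left sum_distrib_right mult_ac del: power_Suc)
  then show ?case
    by (simp only: fps_sum_nth Cons.IH box_sum.simps)
qed

lemma todd_genus_ci_eq_box_sum:
  assumes "\<forall>d\<in>set ds. d > 0"
  shows "todd_genus_ci n ds = box_sum (todd_exp_coeff n) ds 0"
proof -
  have "todd_genus_ci n ds
        = (fps_const (\<Prod>d\<leftarrow>ds. real d) * todd_series ^ (Suc n + length ds)
           * (\<Prod>d\<leftarrow>ds. fps_const (1 / real d) * one_minus_exp_over_x (real d))) $ n"
    by (simp add: todd_genus_ci_def mult.assoc)
  also have "\<dots> = (todd_series ^ Suc n * fps_exp (- real 0) * (\<Prod>d\<leftarrow>ds. exp_geometric_sum d)) $ n"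
    by (simp only: todd_series_power_mult_prod[OF assms]) simp
  finally show ?thesis
    by (simp only: todd_series_power_exp_prod_nth)
qed

lemma todd_genus_ci_eq_pred_choose:
  assumes "\<forall>d\<in>set ds. d > 0"
  shows "todd_genus_ci n ds = 1 + (-1) ^ n * box_sum (pred_choose n) ds 0"
  unfolding todd_genus_ci_eq_box_sum[OF assms] todd_exp_coeff_def
  by (simp add: box_sum_add box_sum_mult box_sum_indicator_0[OF assms])

lemma box_sum_pred_choose_eq:
  assumes "\<forall>d\<in>set ds. d > 0" and "(\<Sum>d\<leftarrow>ds. d - 1) \<le> Suc n"
  shows "box_sum (pred_choose n) ds 0 = of_bool ((\<Sum>d\<leftarrow>ds. d - 1) = Suc n)"
proof -
  let ?s = "\<Sum>d\<leftarrow>ds. d - 1"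
  have "\<forall>m < 0 + ?s. pred_choose n m = 0"
    using assms(2) by (auto simp: pred_choose_def)
  then have "box_sum (pred_choose n) ds 0 = pred_choose n ?s"
    using box_sum_eq_top[OF assms(1), of 0] by simp
  also have "pred_choose n s = of_bool (s = Suc n)" if "s \<le> Suc n" for s
    using that by (auto simp: pred_choose_def)
  finally show ?thesis
    using assms(2) by simp
qed

lemma box_sum_pred_choose_ge:
  assumes "\<forall>d\<in>set ds. d > 0"
  shows "real ((\<Sum>d\<leftarrow>ds. d - 1) choose Suc n) \<le> box_sum (pred_choose n) ds 0"
proof -
  have hockey_stick: "(\<Sum>i\<le>s. pred_choose n i) = real (s choose Suc n)" for s
    by (induction s) (simp_all add: pred_choose_def)
  have "\<And>m. pred_choose n m \<ge> 0"
    by (simp add: pred_choose_def)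
  then show ?thesis
    using box_sum_ge_diagonal_sum[OF assms, of "pred_choose n" 0] by (simp add: hockey_stick)
qed

lemma c1_ci_eq_excess:
  assumes "\<forall>d\<in>set ds. d > 0"
  shows "c1_ci n ds = int n + 1 - int (\<Sum>d\<leftarrow>ds. d - 1)"
proof -
  have "sum_list ds = (\<Sum>d\<leftarrow>ds. d - 1) + length ds"
    using assms by (induction ds) auto
  then show ?thesis
    by (simp add: c1_ci_def)
qed

theorem corollary4p5:
  fixes n :: nat and ds :: "nat list"
  assumes "\<forall>d\<in>set ds. d > 1"
  shows "(c1_ci n ds > 0 \<longrightarrow> todd_genus_ci n ds = 1)
       \<and> (c1_ci n ds = 0 \<longrightarrow> todd_genus_ci n ds = 1 + (-1) ^ n)
       \<and> (c1_ci n ds < 0 \<longrightarrow>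
            (-1) ^ n * todd_genus_ci n ds
              \<ge> (real_of_int (int n + 1 - c1_ci n ds) gchoose (n + 1)) + (-1) ^ n)"
proof -
  have pos: "\<forall>d\<in>set ds. d > 0"
    using assms by auto
  define s where "s = (\<Sum>d\<leftarrow>ds. d - 1)"
  define B where "B = box_sum (pred_choose n) ds 0"
  have c1: "c1_ci n ds = int n + 1 - int s"
    using c1_ci_eq_excess[OF pos] by (simp add: s_def)
  have td: "todd_genus_ci n ds = 1 + (-1) ^ n * B"
    using todd_genus_ci_eq_pred_choose[OF pos] by (simp add: B_def)
  have "B = of_bool (s = Suc n)" if "s \<le> Suc n"
    using box_sum_pred_choose_eq[OF pos] that by (simp add: B_def s_def)
  moreover have "real (s choose Suc n) \<le> B"
    using box_sum_pred_choose_ge[OF pos] by (simp add: B_def s_def)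
  moreover have "(-1) ^ n * todd_genus_ci n ds = (-1) ^ n + B"
    by (simp add: td algebra_simps flip: power_add)
  ultimately show ?thesis
    using td c1 by (auto simp: binomial_gbinomial)
qed

end
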